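(* Let $n$ be an odd perfect number such that $15 \mid n$, $5^{\alpha} \,\|\, n$ and $3^{2b} \,\|\, n$ for some positive integers $\alpha, b$. If $3 \mid (\alpha+1)(2b+1)$, then $n$ has a good prime divisor.
   Context: A positive integer $n$ is perfect if $\sigma(n)=2n$, where $\sigma$ is the sum-of-divisors function. The notation $a \,\|\, b$ means $a \mid b$ and $\gcd(a, b/a) = 1$. Let $\Phi_3(x) = x^2+x+1$. Let $\Sigma$ be the set of primes $p$ with $p \equiv 2$ or $p \equiv 4 \pmod 7$. For a prime $x > 7$, let $T(x)$ be the set of primes $q \neq 3$ with $q \mid \Phi_3(x)$. For a prime $p > 7$, define sets $S_n(p)$ recursively by $S_0(p) = \{p\}$ and $S_{n+1}(p) = S_n(p) \cup \bigcup_{x \in S_n(p)} T(x)$. A prime $p > 7$ is called good if $S_n(p) \cap \Sigma \neq \emptyset$ for some integer $n \ge 0$. *)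

theory Defs
  imports "HOL-Number_Theory.Number_Theory"
begin

definition sigma :: "nat \<Rightarrow> nat" where
  "sigma n = (\<Sum>d \<in> {d. d dvd n}. d)"

definition perfect :: "nat \<Rightarrow> bool" where
  "perfect n \<longleftrightarrow> n > 0 \<and> sigma n = 2 * n"

definition exact_dvd :: "nat \<Rightarrow> nat \<Rightarrow> bool" where
  "exact_dvd a b \<longleftrightarrow> a dvd b \<and> gcd a (b div a) = 1"

definition Phi3 :: "nat \<Rightarrow> nat" where
  "Phi3 x = x^2 + x + 1"

definition Sigma7 :: "nat set" where
  "Sigma7 = {p. prime p \<and> (p mod 7 = 2 \<or> p mod 7 = 4)}"

definition T :: "nat \<Rightarrow> nat set" where
  "T x = {q. prime q \<and> q \<noteq> 3 \<and> q dvd Phi3 x}"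

fun S :: "nat \<Rightarrow> nat \<Rightarrow> nat set" where
  "S 0 p = {p}"
| "S (Suc n) p = S n p \<union> (\<Union>x \<in> S n p. T x)"

definition good :: "nat \<Rightarrow> bool" where
  "good p \<longleftrightarrow> prime p \<and> p > 7 \<and> (\<exists>n. S n p \<inter> Sigma7 \<noteq> {})"

end

theory Submission
  imports Defs
begin

text \<open>
  Since \<sigma> is multiplicative, \<sigma>(q^e) divides \<sigma>(n) = 2n whenever q^e exactly divides n. If
  moreover 3 divides e + 1, the geometric sum \<sigma>(q^e) = 1 + q + \<dots> + q^e is a multiple of
  \<Phi>3(q) = q^2 + q + 1, which is odd and therefore divides n. As 3 is prime, it divides \<alpha> + 1 or
  2b + 1, so \<Phi>3(5) = 31 or \<Phi>3(3) = 13 divides n. Both are good, as witnessed by the chains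
  31, 331 and 13, 61, 97, 3169, 3348577, 3737657091169, 181, 79, in which each prime divides
  \<Phi>3 of its predecessor and the last one is 2 mod 7.
\<close>

lemma bij_betw_mult_divisors:
  fixes a c :: nat
  assumes "coprime a c"
  shows "bij_betw (\<lambda>(x, y). x * y) ({x. x dvd a} \<times> {y. y dvd c}) {d. d dvd a * c}"
proof (rule bij_betw_imageI)
  show "inj_on (\<lambda>(x, y). x * y) ({x. x dvd a} \<times> {y. y dvd c})"
  proof (rule inj_onI, clarsimp)
    fix x y x' y'
    assume "x dvd a" "y dvd c" "x' dvd a" "y' dvd c" "x * y = x' * y'"
    moreover from this assms have "coprime x y'" "coprime x' y"
      using coprime_divisors by blast+
    ultimately show "x = x' \<and> y = y'"
      using coprime_crossproduct_nat by blast
  qed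
  show "(\<lambda>(x, y). x * y) ` ({x. x dvd a} \<times> {y. y dvd c}) = {d. d dvd a * c}"
    by (auto intro: mult_dvd_mono elim!: dvd_productE)
qed

lemma sigma_mult_coprime:
  fixes a c :: nat
  assumes "coprime a c"
  shows "sigma (a * c) = sigma a * sigma c"
proof -
  have "sigma (a * c) = (\<Sum>(x, y) \<in> {x. x dvd a} \<times> {y. y dvd c}. x * y)"
    unfolding sigma_def
    using sum.reindex_bij_betw[OF bij_betw_mult_divisors[OF assms], of "\<lambda>d. d"]
    by (simp add: case_prod_beta)
  also have "\<dots> = sigma a * sigma c"
    unfolding sigma_def sum_product sum.cartesian_product ..
  finally show ?thesis .
qed

lemma sigma_dvd_sigma_of_exact_dvd:
  assumes "exact_dvd a n"
  shows "sigma a dvd sigma n"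
proof -
  have "n = a * (n div a)" and "coprime a (n div a)"
    using assms unfolding exact_dvd_def coprime_iff_gcd_eq_1 by simp_all
  then show ?thesis by (metis dvd_triv_left sigma_mult_coprime)
qed

lemma sigma_prime_power:
  fixes p :: nat
  assumes "prime p"
  shows "sigma (p ^ k) = (\<Sum>i\<le>k. p ^ i)"
proof -
  have "inj_on (\<lambda>i. p ^ i) {..k}"
    using prime_gt_1_nat[OF assms] by (auto intro!: inj_onI simp: power_inject_exp)
  moreover have "{d. d dvd p ^ k} = (\<lambda>i. p ^ i) ` {..k}"
    using divides_primepow_nat[OF assms] by auto
  ultimately show ?thesis unfolding sigma_def by (simp add: sum.reindex)
qed

lemma sum_powers_3k_eq_Phi3_mult:
  fixes x :: nat
  shows "(\<Sum>i<3 * k. x ^ i) = Phi3 x * (\<Sum>j<k. x ^ (3 * j))"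
proof (induction k)
  case (Suc k)
  have "3 * Suc k = Suc (Suc (Suc (3 * k)))" by simp
  then show ?case
    unfolding \<open>3 * Suc k = _\<close> using Suc
    by (simp add: Phi3_def algebra_simps power_add power2_eq_square)
qed simp

lemma Phi3_dvd_sigma_prime_power:
  fixes p :: nat
  assumes "prime p" "3 dvd e + 1"
  shows "Phi3 p dvd sigma (p ^ e)"
proof -
  obtain k where "e + 1 = 3 * k" using assms(2) by blast
  then have "sigma (p ^ e) = Phi3 p * (\<Sum>j<k. p ^ (3 * j))"
    by (simp add: sigma_prime_power[OF assms(1)]
        flip: lessThan_Suc_atMost sum_powers_3k_eq_Phi3_mult)
  then show ?thesis by simp
qed

lemma odd_Phi3: "odd (Phi3 x)"
  by (simp add: Phi3_def power2_eq_square)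

lemma Phi3_dvd_perfect:
  assumes "perfect n" "prime p" "exact_dvd (p ^ e) n" "3 dvd e + 1"
  shows "Phi3 p dvd n"
proof -
  have "Phi3 p dvd sigma (p ^ e)"
    using assms(2,4) by (rule Phi3_dvd_sigma_prime_power)
  also have "\<dots> dvd sigma n"
    using assms(3) by (rule sigma_dvd_sigma_of_exact_dvd)
  also have "\<dots> = 2 * n"
    using assms(1) unfolding perfect_def by simp
  finally have "Phi3 p dvd 2 * n" .
  moreover have "coprime (Phi3 p) 2"
    using odd_Phi3 by (simp add: coprime_commute)
  ultimately show ?thesis
    by (simp add: coprime_dvd_mult_right_iff)
qed

(* The certificate lemmas of HOL-Number_Theory restated with mod_exp, which simp evaluates by
   repeated squaring, so that concrete certificates are checked by simp. *)
lemma prime_by_lucas_certificate: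
  fixes n a :: nat
  assumes "n \<ge> 2" "mod_exp a (n - 1) n = 1" "foldr (*) ps 1 = n - 1"
    "list_all (\<lambda>p. prime p \<and> mod_exp a ((n - 1) div p) n \<noteq> 1) ps"
  shows "prime n"
proof (rule lucas_primefact[OF assms(1) _ assms(3)])
  have "1 mod n = 1" using assms(1) by simp
  then show "[a ^ (n - 1) = 1] (mod n)"
    and "list_all (\<lambda>p. prime p \<and> \<not> [a ^ ((n - 1) div p) = 1] (mod n)) ps"
    using assms(2,4) by (simp_all add: cong_power_nat_code)
qed

lemma prime_by_pocklington_certificate:
  fixes n a b q r :: nat
  assumes "n \<ge> 2" "q * r = n - 1" "n \<le> q\<^sup>2" "mod_exp a r n = b" "foldr (*) ps 1 = q"
    "mod_exp b q n = 1"
    "list_all (\<lambda>p. prime p \<and> coprime (mod_exp b (q div p) n - 1) n) ps"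
  shows "prime n"
  using assms by (intro pocklington_primefact[of n q r a b ps]) (simp_all add: mod_exp_def)

lemma prime_3169: "prime (3169::nat)"
  by (rule prime_by_lucas_certificate[where a=7 and ps="[2,2,2,2,2,3,3,11]"]) simp_all

lemma prime_4519: "prime (4519::nat)"
  by (rule prime_by_lucas_certificate[where a=3 and ps="[2,3,3,251]"]) simp_all

lemma prime_3348577: "prime (3348577::nat)"
  by (rule prime_by_lucas_certificate[where a=13 and ps="[2,2,2,2,2,3,3,7,11,151]"]) simp_all

(* Each coprimality condition is evaluated on its own: simp is very slow on their conjunction. *)
lemma prime_3737657091169: "prime (3737657091169::nat)"
  by (rule prime_by_pocklington_certificate[where a=2 and q=8870797 and r=421344
        and ps="[13,151,4519]" and b=955779654013];
      (simp only: list.pred_inject)?; (intro conjI)?;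
      (rule prime_4519 | simp add: coprime_iff_gcd_eq_1 gcd_non_0_nat))

lemma last_T_path_in_S:
  "successively (\<lambda>x q. q \<in> T x) (p # qs) \<Longrightarrow> last (p # qs) \<in> S (length qs) p"
proof (induction qs rule: rev_induct)
  case (snoc q qs)
  then have "last (p # qs) \<in> S (length qs) p" "q \<in> T (last (p # qs))"
    by (simp_all add: successively_append_iff flip: append_Cons)
  then have "q \<in> S (Suc (length qs)) p" by auto
  then show ?case by (simp flip: append_Cons)
qed simp

lemma good_if_T_path:
  assumes "prime p" "p > 7" "successively (\<lambda>x q. q \<in> T x) (p # qs)" "last (p # qs) \<in> Sigma7"
  shows "good p"
proof -
  have "last (p # qs) \<in> S (length qs) p \<inter> Sigma7"
    using assms(3,4) last_T_path_in_S by blast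
  then show ?thesis using assms(1,2) unfolding good_def by blast
qed

lemma good_31: "good 31"
  by (rule good_if_T_path[where qs="[331]"]) (simp_all add: T_def Phi3_def Sigma7_def)

(* The library simp rule prime_nat_numeral_eq decides primality by trial division; it has to be
   kept away from the large primes, whose certificates are supplied instead. *)
lemma good_13: "good 13"
  by (rule good_if_T_path[where qs="[61, 97, 3169, 3348577, 3737657091169, 181, 79]"])
    (simp_all add: T_def Phi3_def Sigma7_def prime_3169 prime_3348577 prime_3737657091169
      del: prime_nat_numeral_eq, simp_all)

theorem proposition4p1:
  fixes n \<alpha> b :: nat
  assumes "perfect n" and "odd n" and "15 dvd n"
    and "\<alpha> > 0" and "b > 0"
    and "exact_dvd (5 ^ \<alpha>) n" and "exact_dvd (3 ^ (2 * b)) n"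
    and "3 dvd (\<alpha> + 1) * (2 * b + 1)"
  shows "\<exists>p. p dvd n \<and> good p"
proof -
  have "prime (3::nat)" by simp
  then have "3 dvd \<alpha> + 1 \<or> 3 dvd 2 * b + 1"
    using assms(8) prime_dvd_mult_iff by blast
  then show ?thesis
  proof
    assume "3 dvd \<alpha> + 1"
    then have "Phi3 5 dvd n" using Phi3_dvd_perfect[OF assms(1) _ assms(6)] by simp
    then have "31 dvd n" by (simp add: Phi3_def)
    with good_31 show ?thesis by blast
  next
    assume "3 dvd 2 * b + 1"
    then have "Phi3 3 dvd n" using Phi3_dvd_perfect[OF assms(1) _ assms(7)] by simp
    then have "13 dvd n" by (simp add: Phi3_def)
    with good_13 show ?thesis by blast
  qed
qed

end
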